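(* For each integer $t\geq 1$ let $a_t\geq 1$ be an integer, and let $$f_t(X)=X^3+a_t^2(a_t^3-2)X^2-a_t(a_t^3-1)X+1+tX(a_tX-1).$$ Let $\theta_t^{(1)}<\theta_t^{(2)}$ denote the two positive real roots of $f_t(X)$. Fix a real number $0<\alpha<1/4$ and suppose $a_t\leq t^{\alpha}$ for all $t\geq 1$. Then for every positive integer $k\leq 1/\alpha-3$ there is $A'=A'(\alpha,k)>0$ such that $$|\theta_t^{(1)}|\leq a_t^{-k}\quad\text{and}\quad |\theta_t^{(2)}-a_t^{-1}|\leq a_t^{-k}$$ for all $t$ with $a_t\geq A'$.
   Context: For integers $t\geq 1$ and $a_t\geq 1$, the polynomial $f_t(X)$ has only real roots, exactly two of which are positive (the third is negative); $\theta_t^{(1)}<\theta_t^{(2)}$ denote these two positive roots. *)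

theory Defs
  imports Complex_Main
begin

definition f_poly :: "int \<Rightarrow> nat \<Rightarrow> real \<Rightarrow> real" where
  "f_poly a t x = x ^ 3 + (real_of_int a) ^ 2 * ((real_of_int a) ^ 3 - 2) * x ^ 2
     - real_of_int a * ((real_of_int a) ^ 3 - 1) * x + 1
     + real t * x * (real_of_int a * x - 1)"

text \<open>The two positive roots theta^(1) < theta^(2) (the context guarantees exactly two).\<close>
definition theta1 :: "int \<Rightarrow> nat \<Rightarrow> real" where
  "theta1 a t = Min {x. x > 0 \<and> f_poly a t x = 0}"

definition theta2 :: "int \<Rightarrow> nat \<Rightarrow> real" where
  "theta2 a t = Max {x. x > 0 \<and> f_poly a t x = 0}"

end

theory Submission
  imports Defs "HOL-Computational_Algebra.Polynomial"
begin

text \<open>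
  In the variable \<open>u = a x\<close> the polynomial becomes \<open>u^3/a^3 + (u - 1)(M u - 1)\<close> with
  \<open>M = a^3 - 2 + t/a\<close>, a small cubic perturbation of a quadratic with roots \<open>1/M\<close> and \<open>1\<close>.
  It is positive at \<open>u = 0\<close> and \<open>u = 1\<close>, nonpositive at \<open>u = 1/2\<close> and has no positive roots
  beyond \<open>1\<close>, so there are roots \<open>u\<^sub>1 \<le> 1/2 \<le> u\<^sub>2 < 1\<close>. Since the cubic term is at most
  \<open>1\<close> on \<open>[0, 1/2]\<close> and at most \<open>1/a^3\<close> on \<open>[1/2, 1]\<close>, we get \<open>u\<^sub>1 = O(1/M)\<close> and
  \<open>1 - u\<^sub>2 = O(1/(a^3 M))\<close>. Hence \<open>\<theta>\<^sub>1 \<le> u\<^sub>1/a\<close> and \<open>u\<^sub>2/a \<le> \<theta>\<^sub>2 < 1/a\<close> are within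
  \<open>O(1/(a M))\<close> of \<open>0\<close> and \<open>1/a\<close>, and \<open>a M \<ge> t \<ge> a^(k+3)\<close> because \<open>a \<le> t^\<alpha>\<close> and
  \<open>k + 3 \<le> 1/\<alpha>\<close>.
\<close>

definition rescaled_f :: "real \<Rightarrow> real \<Rightarrow> real \<Rightarrow> real" where
  "rescaled_f A M u = u ^ 3 / A ^ 3 + (u - 1) * (M * u - 1)"

lemma f_poly_eq_rescaled_f:
  assumes "a \<noteq> 0"
  shows "f_poly a t x = rescaled_f (of_int a) ((of_int a) ^ 3 - 2 + real t / of_int a) (of_int a * x)"
  using assms unfolding f_poly_def rescaled_f_def
  by (simp add: field_simps power3_eq_cube power2_eq_square)

lemma finite_positive_roots_f_poly: "finite {x. x > 0 \<and> f_poly a t x = 0}"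
proof -
  define p where "p = [:1, - (of_int a * ((of_int a) ^ 3 - 1)) - real t,
     (of_int a) ^ 2 * ((of_int a) ^ 3 - 2) + real t * of_int a, 1:]"
  have "f_poly a t x = poly p x" for x
    unfolding f_poly_def p_def by (simp add: algebra_simps power3_eq_cube power2_eq_square)
  moreover have "finite {x. poly p x = 0}"
    by (rule poly_roots_finite) (simp add: p_def)
  ultimately show ?thesis
    by (auto intro: finite_subset)
qed

lemma rescaled_f_root_lt_one:
  assumes "A > 0" "M \<ge> 1" "u > 0" "rescaled_f A M u = 0"
  shows "u < 1"
proof (rule ccontr)
  assume "\<not> u < 1"
  then have "M * u \<ge> 1"
    using assms(2) by (metis mult_mono' mult_1_right not_less order_trans zero_le_one)
  with \<open>\<not> u < 1\<close> have "(u - 1) * (M * u - 1) \<ge> 0" by simp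
  moreover have "u ^ 3 / A ^ 3 > 0" using assms by simp
  ultimately show False using assms(4) unfolding rescaled_f_def by linarith
qed

lemma rescaled_f_small_root:
  assumes "A \<ge> 1" "M \<ge> 1" "u > 0" "u \<le> 1/2" "rescaled_f A M u = 0"
  shows "u \<le> 3 / M"
proof -
  have "u ^ 3 / A ^ 3 \<le> 1"
    using assms by (simp add: power_le_one divide_le_eq_1 order_trans[OF _ one_le_power])
  then have cubic: "(1 - u) * (M * u - 1) \<le> 1"
    using assms(5) unfolding rescaled_f_def by (simp add: algebra_simps)
  have "M * u - 1 \<le> 2"
  proof (rule ccontr)
    assume "\<not> M * u - 1 \<le> 2"
    then have "(1/2) * (M * u - 1) \<le> (1 - u) * (M * u - 1)"
      using assms(4) by (intro mult_right_mono) auto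
    moreover have "(1/2) * (M * u - 1) > 1" using \<open>\<not> M * u - 1 \<le> 2\<close> by simp
    ultimately show False using cubic by linarith
  qed
  then show ?thesis using assms by (simp add: field_simps)
qed

lemma rescaled_f_root_near_one:
  assumes "A \<ge> 1" "M \<ge> 4" "u \<ge> 1/2" "u < 1" "rescaled_f A M u = 0"
  shows "1 - u \<le> 4 / (A ^ 3 * M)"
proof -
  have "u ^ 3 / A ^ 3 \<le> 1 / A ^ 3"
    using assms by (simp add: power_le_one divide_right_mono)
  then have cubic: "(1 - u) * (M * u - 1) \<le> 1 / A ^ 3"
    using assms(5) unfolding rescaled_f_def by (simp add: algebra_simps)
  have "M * u \<ge> M / 2"
    using assms mult_left_mono[of "1/2" u M] by simp
  then have "M * u - 1 \<ge> M / 4" using assms(2) by linarith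
  then have "(1 - u) * (M / 4) \<le> (1 - u) * (M * u - 1)"
    using assms by (intro mult_left_mono) auto
  with cubic have "(1 - u) * (M / 4) \<le> 1 / A ^ 3" by linarith
  then show ?thesis using assms by (simp add: field_simps)
qed

lemma rescaled_f_roots_exist:
  assumes "A \<ge> 1" "M \<ge> 4"
  obtains u\<^sub>1 u\<^sub>2 where "0 < u\<^sub>1" "u\<^sub>1 \<le> 1/2" "rescaled_f A M u\<^sub>1 = 0"
    and "1/2 \<le> u\<^sub>2" "u\<^sub>2 < 1" "rescaled_f A M u\<^sub>2 = 0"
proof -
  have cont: "isCont (rescaled_f A M) u" for u
    unfolding rescaled_f_def using assms by (intro continuous_intros) auto
  have at_0: "rescaled_f A M 0 = 1" and at_1: "rescaled_f A M 1 > 0"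
    using assms by (simp_all add: rescaled_f_def)
  have "(1/2) ^ 3 / A ^ 3 \<le> (1/2) ^ 3"
    using assms by (simp add: divide_le_eq order_trans[OF _ one_le_power])
  then have at_half: "rescaled_f A M (1/2) \<le> 0"
    using assms(2) unfolding rescaled_f_def by (simp add: field_simps)
  obtain u\<^sub>1 where u\<^sub>1: "0 \<le> u\<^sub>1" "u\<^sub>1 \<le> 1/2" "rescaled_f A M u\<^sub>1 = 0"
    using IVT2[of "rescaled_f A M" "1/2" 0 0] at_0 at_half cont by auto
  obtain u\<^sub>2 where u\<^sub>2: "1/2 \<le> u\<^sub>2" "u\<^sub>2 \<le> 1" "rescaled_f A M u\<^sub>2 = 0"
    using IVT[of "rescaled_f A M" "1/2" 0 1] at_half at_1 cont by auto
  show thesis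
  proof
    show "0 < u\<^sub>1" using u\<^sub>1 at_0 by (cases "u\<^sub>1 = 0") auto
    show "u\<^sub>2 < 1" using u\<^sub>2 at_1 by (cases "u\<^sub>2 = 1") auto
  qed (use u\<^sub>1 u\<^sub>2 in auto)
qed

lemma rescaling_parameter_ge:
  fixes A T :: real
  assumes "A \<ge> 2" "T \<ge> 0"
  shows "A ^ 3 - 2 + T / A \<ge> 6"
proof -
  have "(2::real) ^ 3 \<le> A ^ 3" using assms by (intro power_mono) auto
  moreover have "T / A \<ge> 0" using assms by simp
  ultimately show ?thesis by simp
qed

lemma f_poly_positive_root_lt:
  assumes "a \<ge> 2" "x > 0" "f_poly a t x = 0"
  shows "x < 1 / of_int a"
proof -
  let ?A = "real_of_int a"
  have "?A * x < 1"
    using rescaled_f_root_lt_one[of ?A "?A ^ 3 - 2 + real t / ?A" "?A * x"]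
      rescaling_parameter_ge[of ?A "real t"] f_poly_eq_rescaled_f[of a t x] assms
    by simp
  then show ?thesis using assms(1) by (simp add: field_simps)
qed

lemma f_poly_positive_roots:
  fixes a :: int and t :: nat
  assumes "a \<ge> 2"
  defines "A \<equiv> real_of_int a"
  defines "D \<equiv> A ^ 4 - 2 * A + real t"
  obtains x\<^sub>1 x\<^sub>2 where "0 < x\<^sub>1" "f_poly a t x\<^sub>1 = 0" "x\<^sub>1 \<le> 3 / D"
    and "0 < x\<^sub>2" "f_poly a t x\<^sub>2 = 0" "1 / A - x\<^sub>2 \<le> 4 / (A ^ 3 * D)"
proof -
  define M where "M = A ^ 3 - 2 + real t / A"
  have A: "A \<ge> 2" using assms(1) by (simp add: A_def)
  have M: "M \<ge> 6" unfolding M_def using A by (intro rescaling_parameter_ge) auto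
  have D: "D = A * M" using A unfolding D_def M_def by (simp add: field_simps eval_nat_numeral)
  have f_eq: "f_poly a t x = rescaled_f A M (A * x)" for x
    using f_poly_eq_rescaled_f[of a t x] A unfolding A_def M_def by simp
  obtain u\<^sub>1 u\<^sub>2 where u\<^sub>1: "0 < u\<^sub>1" "u\<^sub>1 \<le> 1/2" "rescaled_f A M u\<^sub>1 = 0"
    and u\<^sub>2: "1/2 \<le> u\<^sub>2" "u\<^sub>2 < 1" "rescaled_f A M u\<^sub>2 = 0"
    using rescaled_f_roots_exist[of A M] A M by auto
  show thesis
  proof
    show "0 < u\<^sub>1 / A" "0 < u\<^sub>2 / A" using A u\<^sub>1 u\<^sub>2 by auto
    show "f_poly a t (u\<^sub>1 / A) = 0" "f_poly a t (u\<^sub>2 / A) = 0"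
      using f_eq u\<^sub>1 u\<^sub>2 A by auto
    have "u\<^sub>1 \<le> 3 / M" using rescaled_f_small_root[of A M u\<^sub>1] A M u\<^sub>1 by simp
    then show "u\<^sub>1 / A \<le> 3 / D" using A M unfolding D by (simp add: field_simps)
    have "1 - u\<^sub>2 \<le> 4 / (A ^ 3 * M)" using rescaled_f_root_near_one[of A M u\<^sub>2] A M u\<^sub>2 by simp
    then have "(1 - u\<^sub>2) / A \<le> 4 / (A ^ 3 * M) / A" using A by (intro divide_right_mono) auto
    then show "1 / A - u\<^sub>2 / A \<le> 4 / (A ^ 3 * D)" unfolding D by (simp add: diff_divide_distrib ac_simps)
  qed
qed

lemma theta1_bounds:
  assumes "a \<ge> 2"
  shows "0 < theta1 a t" "theta1 a t \<le> 3 / ((of_int a) ^ 4 - 2 * of_int a + real t)"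
proof -
  let ?S = "{x. x > 0 \<and> f_poly a t x = 0}"
  obtain x where x: "0 < x" "f_poly a t x = 0" "x \<le> 3 / ((of_int a) ^ 4 - 2 * of_int a + real t)"
    using f_poly_positive_roots[OF assms] by metis
  have fin: "finite ?S" by (rule finite_positive_roots_f_poly)
  moreover have "?S \<noteq> {}" using x by auto
  ultimately have "Min ?S \<in> ?S" by (rule Min_in)
  moreover have "Min ?S \<le> x" using fin x by simp
  ultimately show "0 < theta1 a t" "theta1 a t \<le> 3 / ((of_int a) ^ 4 - 2 * of_int a + real t)"
    using x unfolding theta1_def by auto
qed

lemma theta2_bounds:
  assumes "a \<ge> 2"
  shows "theta2 a t < 1 / of_int a"
    "1 / of_int a - theta2 a t \<le> 4 / ((of_int a) ^ 3 * ((of_int a) ^ 4 - 2 * of_int a + real t))"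
proof -
  let ?S = "{x. x > 0 \<and> f_poly a t x = 0}"
  obtain x where x: "0 < x" "f_poly a t x = 0"
    "1 / of_int a - x \<le> 4 / ((of_int a) ^ 3 * ((of_int a) ^ 4 - 2 * of_int a + real t))"
    using f_poly_positive_roots[OF assms] by metis
  have fin: "finite ?S" by (rule finite_positive_roots_f_poly)
  moreover have "?S \<noteq> {}" using x by auto
  ultimately have "Max ?S \<in> ?S" by (rule Max_in)
  moreover have "x \<le> Max ?S" using fin x by simp
  ultimately show "theta2 a t < 1 / of_int a"
    "1 / of_int a - theta2 a t \<le> 4 / ((of_int a) ^ 3 * ((of_int a) ^ 4 - 2 * of_int a + real t))"
    using x f_poly_positive_root_lt[OF assms] unfolding theta2_def by auto
qed

lemma power_le_of_le_powr:
  fixes A T \<alpha> :: real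
  assumes "A \<ge> 1" "T \<ge> 1" "0 < \<alpha>" "A \<le> T powr \<alpha>" "real n \<le> 1 / \<alpha>"
  shows "A ^ n \<le> T"
proof -
  have "A ^ n = A powr real n" using assms(1) by (simp add: powr_realpow)
  also have "\<dots> \<le> A powr (1 / \<alpha>)" using assms by (intro powr_mono) auto
  also have "\<dots> \<le> (T powr \<alpha>) powr (1 / \<alpha>)" using assms by (intro powr_mono2) auto
  also have "\<dots> = T" using assms by (simp add: powr_powr)
  finally show ?thesis .
qed

lemma divide_le_inverse_power:
  fixes A c D :: real
  assumes "A > 0" "0 \<le> c" "c \<le> A ^ j" "A ^ (k + j) \<le> D"
  shows "c / D \<le> 1 / A ^ k"
proof -
  have "c / D \<le> A ^ j / A ^ (k + j)"
    using assms by (intro frac_le) auto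
  also have "\<dots> = 1 / A ^ k" using assms(1) by (simp add: power_add)
  finally show ?thesis .
qed

lemma theta_estimates:
  fixes a :: int and t k :: nat
  assumes "a \<ge> 2" "(of_int a) ^ (k + 3) \<le> real t"
  shows "\<bar>theta1 a t\<bar> \<le> 1 / (of_int a) ^ k"
    and "\<bar>theta2 a t - 1 / of_int a\<bar> \<le> 1 / (of_int a) ^ k"
proof -
  define A where "A = real_of_int a"
  define D where "D = A ^ 4 - 2 * A + real t"
  have A: "A \<ge> 2" using assms(1) by (simp add: A_def)
  have "A * (A ^ 3 - 2) \<ge> 0"
    using A by (intro mult_nonneg_nonneg) (auto intro: order_trans[OF _ power_increasing[of 1 3 A]])
  then have "real t \<le> D" unfolding D_def by (simp add: algebra_simps eval_nat_numeral)
  with assms(2) have D: "A ^ (k + 3) \<le> D" by (simp add: A_def)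
  have "theta1 a t \<le> 3 / D" using theta1_bounds[OF assms(1)] by (simp add: A_def D_def)
  also have "\<dots> \<le> 1 / A ^ k"
    using A D by (intro divide_le_inverse_power) (auto intro: order_trans[OF _ power_mono[of 2 A 3]])
  finally show "\<bar>theta1 a t\<bar> \<le> 1 / (of_int a) ^ k"
    using theta1_bounds(1)[OF assms(1), of t] by (simp add: A_def)
  have "1 / A - theta2 a t \<le> 4 / (A ^ 3 * D)"
    using theta2_bounds[OF assms(1)] by (simp add: A_def D_def)
  also have "\<dots> \<le> 1 / A ^ k"
  proof (rule divide_le_inverse_power)
    have "A ^ 3 * A ^ (k + 3) \<le> A ^ 3 * D" using A D by (intro mult_left_mono) auto
    then show "A ^ (k + 6) \<le> A ^ 3 * D" by (simp add: power_add ac_simps)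
    show "4 \<le> A ^ 6" using power_mono[of 2 A 6] A by simp
  qed (use A in auto)
  finally show "\<bar>theta2 a t - 1 / of_int a\<bar> \<le> 1 / (of_int a) ^ k"
    using theta2_bounds(1)[OF assms(1), of t] by (simp add: A_def)
qed

text \<open>\<open>A' = 2\<close> works for every \<open>\<alpha>\<close> and \<open>k\<close>.\<close>

theorem mainTheorem3:
  fixes a :: "nat \<Rightarrow> int" and \<alpha> :: real
  assumes a_ge1: "\<And>t. t \<ge> 1 \<Longrightarrow> a t \<ge> 1"
    and alpha_pos: "0 < \<alpha>" and alpha_lt: "\<alpha> < 1/4"
    and a_bound: "\<And>t. t \<ge> 1 \<Longrightarrow> real_of_int (a t) \<le> (real t) powr \<alpha>"
  shows "\<forall>k::nat. 1 \<le> k \<and> real k \<le> 1/\<alpha> - 3 \<longrightarrow>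
           (\<exists>A'::real. A' > 0 \<and>
              (\<forall>t::nat. t \<ge> 1 \<and> real_of_int (a t) \<ge> A' \<longrightarrow>
                 \<bar>theta1 (a t) t\<bar> \<le> 1 / (real_of_int (a t)) ^ k \<and>
                 \<bar>theta2 (a t) t - 1 / real_of_int (a t)\<bar> \<le> 1 / (real_of_int (a t)) ^ k))"
proof (intro allI impI exI[of _ 2] conjI)
  fix k t :: nat
  assume k: "1 \<le> k \<and> real k \<le> 1/\<alpha> - 3" and t: "t \<ge> 1 \<and> real_of_int (a t) \<ge> 2"
  then have a_t: "a t \<ge> 2" by simp
  have "(of_int (a t)) ^ (k + 3) \<le> real t"
    using power_le_of_le_powr[of "of_int (a t)" "real t" \<alpha> "k + 3"] t k alpha_pos a_bound[of t]
    by simp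
  with a_t show "\<bar>theta1 (a t) t\<bar> \<le> 1 / (real_of_int (a t)) ^ k"
    and "\<bar>theta2 (a t) t - 1 / real_of_int (a t)\<bar> \<le> 1 / (real_of_int (a t)) ^ k"
    by (rule theta_estimates)+
qed simp

end
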